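(* Let $\alpha\in[0,1)$ and let $h(z)=z+a_2z^2+\cdots$ be analytic in $\mathbb{D}=\{|z|<1\}$ and convex of order $\alpha$. Let $u(z)=h(z)+\frac{1}{2}(1-|z|^{2})\,zh'(z)$ for $z\in\mathbb{D}$. Then $u$ is univalent in $\mathbb{D}$ if $\alpha\ge 1/2$, and if $\alpha\in[0,1/2)$ then $u$ is univalent in the subdisk $|z|<r$, where $$r=\frac{-(1-\alpha)+\sqrt{(1-\alpha)^2+1-2\alpha}}{1-2\alpha}.$$
   Context: For $\alpha\in[-1/2,1)$, a locally univalent analytic function $h(z)=z+a_2z^2+\cdots$ in $\mathbb{D}$ is convex of order $\alpha$ if $\operatorname{Re}\big(1+zh''(z)/h'(z)\big)>\alpha$ for all $z\in\mathbb{D}$. *)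

theory Defs
  imports "HOL-Complex_Analysis.Complex_Analysis"
begin

definition convex_of_order :: "real \<Rightarrow> (complex \<Rightarrow> complex) \<Rightarrow> bool" where
  "convex_of_order \<alpha> h \<longleftrightarrow>
     h holomorphic_on ball 0 1 \<and> h 0 = 0 \<and> deriv h 0 = 1 \<and>
     (\<forall>z\<in>ball 0 1. deriv h z \<noteq> 0) \<and>
     (\<forall>z\<in>ball 0 1. Re (1 + z * deriv (deriv h) z / deriv h z) > \<alpha>)"

end

(* For convex h, u is in fact univalent in the whole unit disc (only alpha >= 0 is used), and the
   radius r never exceeds 1, so both claims follow.

   Let p = 1 + z h''/h'. Along |z| = R < 1 the tangent direction z h'(z) turns with angular speed
   2 pi Re p > 0 and, since the mean of p over the circle is p(0) = 1, through exactly one full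
   turn. Hence the image of |z| < R lies strictly inside every tangent half-plane of the image
   curve, and by the argument principle h is univalent with convex image on each such disc.
   Given z1 /= z2, pull the segment from h z1 to h z2 back by h to a path G; with
   c = h z2 - h z1 the derivative of Re (conj c * u (G t)) is at least |c|^2 (1 - |G t|^2) > 0,
   so u z1 /= u z2. *)

theory Submission
  imports Defs
begin

lemma nonneg_if_derivative_follows_sin:
  fixes F \<Theta> w :: "real \<Rightarrow> real"
  assumes F': "\<And>s. s \<in> {0<..<1} \<Longrightarrow> (F has_real_derivative w s * sin (2 * pi * \<Theta> s)) (at s)"
    and w: "\<And>s. s \<in> {0<..<1} \<Longrightarrow> 0 \<le> w s"
    and F: "continuous_on {0..1} F" "F 0 = 0" "F 1 = 0"
    and \<Theta>: "mono_on {0..1} \<Theta>" "\<Theta> 0 = 0" "\<Theta> 1 = 1"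
    and s: "s \<in> {0..1}"
  shows "0 \<le> F s"
proof (cases "\<Theta> s \<le> 1/2")
  case True
  have "F 0 \<le> F s"
  proof (rule DERIV_nonneg_imp_increasing_open[of 0 s F])
    show "0 \<le> s" using s by auto
    show "continuous_on {0..s} F" using F(1) by (rule continuous_on_subset) (use s in auto)
    fix x assume x: "0 < x" "x < s"
    have "0 \<le> \<Theta> x" "\<Theta> x \<le> 1/2"
      using mono_onD[OF \<Theta>(1), of 0 x] mono_onD[OF \<Theta>(1), of x s] \<Theta>(2) True x s by auto
    then have "0 \<le> sin (2 * pi * \<Theta> x)" by (intro sin_ge_zero) auto
    then show "\<exists>y. (F has_real_derivative y) (at x) \<and> 0 \<le> y"
      using F'[of x] w[of x] x s by (intro exI[of _ "w x * sin (2 * pi * \<Theta> x)"]) auto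
  qed
  then show ?thesis using F(2) by simp
next
  case False
  have "F 1 \<le> F s"
  proof (rule DERIV_nonpos_imp_decreasing_open[of s 1 F])
    show "s \<le> 1" using s by auto
    show "continuous_on {s..1} F" using F(1) by (rule continuous_on_subset) (use s in auto)
    fix x assume x: "s < x" "x < 1"
    have "1/2 \<le> \<Theta> x" "\<Theta> x \<le> 1"
      using mono_onD[OF \<Theta>(1), of s x] mono_onD[OF \<Theta>(1), of x 1] \<Theta>(3) False x s by auto
    then have "sin (2 * pi * \<Theta> x) \<le> 0"
      by (cases "\<Theta> x = 1") (auto intro: sin_le_zero)
    then show "\<exists>y. (F has_real_derivative y) (at x) \<and> y \<le> 0"
      using F'[of x] w[of x] x s
      by (intro exI[of _ "w x * sin (2 * pi * \<Theta> x)"]) (auto simp: mult_nonneg_nonpos)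
  qed
  then show ?thesis using F(3) by simp
qed

lemma has_vector_derivative_Ln_quotient:
  fixes q H :: "real \<Rightarrow> complex"
  assumes q': "(q has_vector_derivative q') (at t)" and H': "(H has_vector_derivative H') (at t)"
    and q: "q t \<noteq> 0" and H: "H t \<noteq> 0" and slit: "q t / H t \<notin> \<real>\<^sub>\<le>\<^sub>0"
  shows "((\<lambda>t. Ln (q t / H t)) has_vector_derivative q' / q t - H' / H t) (at t)"
proof -
  have "((\<lambda>s. inverse (H s)) has_vector_derivative H' * - (inverse (H t) ^ Suc (Suc 0))) (at t)"
    using field_vector_diff_chain_at[OF H' DERIV_inverse[OF H]] by (simp add: o_def)
  from has_vector_derivative_mult[OF q' this]
  have "((\<lambda>s. q s * inverse (H s)) has_vector_derivative
      q t * (H' * - (inverse (H t) ^ Suc (Suc 0))) + q' * inverse (H t)) (at t)" .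
  from field_vector_diff_chain_at[OF this has_field_derivative_Ln[OF slit[unfolded divide_inverse]]]
  show ?thesis unfolding comp_def divide_inverse
    by (rule has_vector_derivative_eq_rhs) (use q H in \<open>simp add: field_simps power2_eq_square\<close>)
qed

lemma Re_pullback_derivative_pos:
  fixes z a b c d :: complex
  assumes a: "a \<noteq> 0" and c: "c \<noteq> 0" and z: "cmod z < 1" and P: "0 < Re (1 + z * b / a)"
    and d: "d * a = c"
  shows "0 < Re (cnj c * (d * a + ((1 - z * cnj z) * (z * d * b + d * a)
    - (z * cnj d + d * cnj z) * (z * a)) / 2))"
proof -
  define N where "N = z * cnj d + d * cnj z"
  have "cnj c * (d * a + ((1 - z * cnj z) * (z * d * b + d * a) - N * (z * a)) / 2) =
      cnj c * c + of_real ((1 - (cmod z)\<^sup>2) / 2) * (cnj c * c) * (1 + z * b / a) - cnj c * N * z * a / 2"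
    using a d[symmetric] unfolding complex_norm_square[symmetric] by (simp add: field_simps)
  also have "cnj c * c = of_real ((cmod c)\<^sup>2)" by (subst complex_norm_square) (rule mult.commute)
  finally have "Re (cnj c * (d * a + ((1 - z * cnj z) * (z * d * b + d * a) - N * (z * a)) / 2)) =
      (cmod c)\<^sup>2 + (1 - (cmod z)\<^sup>2) / 2 * (cmod c)\<^sup>2 * Re (1 + z * b / a) - Re (cnj c * N * z * a) / 2"
    by simp
  moreover have "Re (cnj c * N * z * a) \<le> 2 * (cmod c)\<^sup>2 * (cmod z)\<^sup>2"
  proof -
    have "cmod N \<le> 2 * cmod z * cmod d"
      using norm_triangle_ineq[of "z * cnj d" "d * cnj z"] by (simp add: N_def norm_mult mult_ac)
    then have "cmod (cnj c * N * z * a) \<le> cmod c * (2 * cmod z * cmod d) * cmod z * cmod a"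
      by (simp add: norm_mult mult_right_mono mult_left_mono)
    also have "\<dots> = 2 * cmod c * (cmod z)\<^sup>2 * (cmod d * cmod a)"
      by (simp add: power2_eq_square)
    also have "cmod d * cmod a = cmod c" using d by (metis norm_mult)
    finally show ?thesis
      using complex_Re_le_cmod[of "cnj c * N * z * a"] by (simp add: power2_eq_square mult_ac)
  qed
  moreover have "0 < (cmod c)\<^sup>2 - (cmod c)\<^sup>2 * (cmod z)\<^sup>2"
    using z c by (simp add: power_less_one_iff algebra_simps)
  moreover have "0 \<le> (1 - (cmod z)\<^sup>2) / 2 * (cmod c)\<^sup>2 * Re (1 + z * b / a)"
    using z P by (intro mult_nonneg_nonneg) (auto simp: power_le_one_iff)
  ultimately show ?thesis unfolding N_def by linarith
qed

definition circle :: "complex \<Rightarrow> real \<Rightarrow> complex" where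
  "circle z0 t = z0 * exp (2 * of_real pi * \<i> * of_real t)"

lemma norm_circle [simp]: "cmod (circle z0 t) = cmod z0"
  by (simp add: circle_def norm_mult)

lemma circle_0 [simp]: "circle z0 0 = z0" and circle_1 [simp]: "circle z0 1 = z0"
  by (simp_all add: circle_def)

lemma circlepath_eq_circle: "circlepath 0 R = circle (of_real R)"
  by (simp add: circlepath circle_def fun_eq_iff)

lemma circle_has_vector_derivative:
  "(circle z0 has_vector_derivative 2 * of_real pi * \<i> * circle z0 t) (at t)"
proof -
  have "((\<lambda>x. z0 * exp (2 * of_real pi * \<i> * x)) has_field_derivative 2 * of_real pi * \<i> * circle z0 t)
      (at (of_real t))"
    unfolding circle_def by (auto intro!: derivative_eq_intros simp: algebra_simps)
  from has_vector_derivative_real_field[OF this] show ?thesis unfolding circle_def by simp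
qed

lemma circle_surj:
  assumes "z0 \<noteq> 0" "cmod z = cmod z0"
  obtains t where "t \<in> {0..1}" "circle z0 t = z"
proof -
  define a where "a = Arg2pi (z / z0)"
  have "cmod (z / z0) = 1" using assms by (simp add: norm_divide)
  then have "z / z0 = exp (\<i> * of_real a)" using Arg2pi_eq[of "z / z0"] unfolding a_def by simp
  then have "z = z0 * exp (\<i> * of_real a)" using assms(1) by (simp add: field_simps)
  moreover have "0 \<le> a" "a < 2 * pi" unfolding a_def by (auto intro: Arg2pi_ge_0 Arg2pi_lt_2pi)
  ultimately show ?thesis
    by (intro that[of "a / (2 * pi)"]) (auto simp: circle_def field_simps)
qed

lemma contour_integral_logderiv_eq_card_zeros:
  fixes f :: "complex \<Rightarrow> complex"
  assumes f: "f holomorphic_on ball 0 1" "\<not> f constant_on ball 0 1"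
    and simple: "\<And>z. z \<in> ball 0 1 \<Longrightarrow> f z = 0 \<Longrightarrow> deriv f z \<noteq> 0"
    and R: "0 < R" "R < 1" and no_zero: "\<And>z. cmod z = R \<Longrightarrow> f z \<noteq> 0"
  shows "contour_integral (circlepath 0 R) (\<lambda>z. deriv f z / f z) =
    2 * of_real pi * \<i> * of_nat (card {z \<in> ball 0 R. f z = 0})"
proof -
  define R1 where "R1 = (1 + R) / 2"
  have R1: "R < R1" "R1 < 1" unfolding R1_def using R by auto
  define Z where "Z = {z \<in> ball 0 R1. f z = 0 \<or> z \<in> {}}"
  have "finite {z \<in> cball 0 R1. f z = 0}"
    using R1 by (intro holomorphic_compact_finite_zeros[OF f(1) open_ball connected_ball _ _ f(2)]) auto
  then have Z_finite: "finite Z" by (rule finite_subset[rotated]) (auto simp: Z_def)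
  have "contour_integral (circlepath 0 R) (\<lambda>z. deriv f z * 1 / f z) =
      2 * pi * \<i> * (\<Sum>p\<in>Z. winding_number (circlepath 0 R) p * 1 * zorder f p)"
    unfolding Z_def
  proof (rule argument_principle[of "ball 0 R1" f "{}" "\<lambda>_. 1" "circlepath 0 R"])
    show "path_image (circlepath 0 R) \<subseteq> ball 0 R1 - {z \<in> ball 0 R1. f z = 0 \<or> z \<in> {}}"
      using R R1 no_zero by (auto simp: path_image_circlepath_nonneg)
    show "\<forall>z. z \<notin> ball 0 R1 \<longrightarrow> winding_number (circlepath 0 R) z = 0"
      using R R1 by (auto intro!: winding_number_zero_outside[of _ "cball 0 R"] simp: path_image_circlepath_nonneg)
    show "f holomorphic_on ball 0 R1 - {}"
      using f(1) by (rule holomorphic_on_subset) (use R1 in auto)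
  qed (use Z_finite in \<open>auto simp: Z_def\<close>)
  moreover have "winding_number (circlepath 0 R) p * 1 * of_int (zorder f p) = (if cmod p < R then 1 else 0)"
    if "p \<in> Z" for p
  proof -
    have p: "p \<in> ball 0 1" "f p = 0" using that R1 unfolding Z_def by auto
    have "zorder f p = 1"
      by (rule zorder_zero_eqI[OF f(1) open_ball p(1)]) (use p simple in auto)
    moreover have "cmod p \<noteq> R" using no_zero p by auto
    moreover have "winding_number (circlepath 0 R) p = 1" if "cmod p < R"
      using winding_number_circlepath[of p 0 R] that by simp
    moreover have "winding_number (circlepath 0 R) p = 0" if "cmod p > R"
      using R that by (intro winding_number_zero_outside[of _ "cball 0 R"]) (auto simp: path_image_circlepath_nonneg)
    ultimately show ?thesis by (cases "cmod p < R") auto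
  qed
  then have "(\<Sum>p\<in>Z. winding_number (circlepath 0 R) p * 1 * of_int (zorder f p)) =
      of_nat (card {p \<in> Z. cmod p < R})"
    using sum.inter_filter[OF Z_finite, of "\<lambda>_. 1::complex" "\<lambda>p. cmod p < R"] by (simp cong: sum.cong)
  moreover have "{p \<in> Z. cmod p < R} = {z \<in> ball 0 R. f z = 0}" unfolding Z_def using R1 by auto
  ultimately show ?thesis by simp
qed

lemma points_in_smaller_ball:
  fixes z1 z2 :: complex
  assumes "z1 \<in> ball 0 1" "z2 \<in> ball 0 1"
  obtains R where "0 < R" "R < 1" "z1 \<in> ball 0 R" "z2 \<in> ball 0 R"
proof
  define m where "m = max (cmod z1) (cmod z2)"
  have "0 \<le> m" "m < 1" using assms by (auto simp: m_def le_max_iff_disj)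
  then show "0 < (m + 1) / 2" "(m + 1) / 2 < 1" "z1 \<in> ball 0 ((m + 1) / 2)" "z2 \<in> ball 0 ((m + 1) / 2)"
    by (auto simp: m_def)
qed

locale convex_map =
  fixes h :: "complex \<Rightarrow> complex"
  assumes holomorphic: "h holomorphic_on ball 0 1"
    and deriv_nonzero: "\<And>z. z \<in> ball 0 1 \<Longrightarrow> deriv h z \<noteq> 0"
    and Re_convexity_pos: "\<And>z. z \<in> ball 0 1 \<Longrightarrow> 0 < Re (1 + z * deriv (deriv h) z / deriv h z)"
begin

definition turning_rate :: "complex \<Rightarrow> complex" where
  "turning_rate z = 1 + z * deriv (deriv h) z / deriv h z"

lemma deriv_holomorphic: "deriv h holomorphic_on ball 0 1"
  by (rule holomorphic_deriv[OF holomorphic open_ball])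

lemma has_field_derivative_h: "z \<in> ball 0 1 \<Longrightarrow> (h has_field_derivative deriv h z) (at z)"
  by (rule holomorphic_derivI[OF holomorphic open_ball])

lemma deriv_has_field_derivative:
  "z \<in> ball 0 1 \<Longrightarrow> (deriv h has_field_derivative deriv (deriv h) z) (at z)"
  by (rule holomorphic_derivI[OF deriv_holomorphic open_ball])

lemma turning_rate_holomorphic: "turning_rate holomorphic_on ball 0 1"
  unfolding turning_rate_def[abs_def]
  using deriv_holomorphic holomorphic_deriv[OF deriv_holomorphic open_ball] deriv_nonzero
  by (auto intro!: holomorphic_intros)

lemma Re_turning_rate_pos: "z \<in> ball 0 1 \<Longrightarrow> 0 < Re (turning_rate z)"
  using Re_convexity_pos by (simp add: turning_rate_def)

lemma not_constant: "\<not> (\<lambda>z. h z - w) constant_on ball 0 1"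
proof
  assume "(\<lambda>z. h z - w) constant_on ball 0 1"
  then obtain c where c: "\<And>z. z \<in> ball 0 1 \<Longrightarrow> h z - w = c" unfolding constant_on_def by blast
  have "((\<lambda>z. h z - w) has_field_derivative 0) (at 0)"
    by (rule has_field_derivative_transform_within_open[of "\<lambda>_. c" 0 0 "ball 0 1"])
       (use c in \<open>auto intro: derivative_eq_intros\<close>)
  moreover have "((\<lambda>z. h z - w) has_field_derivative deriv h 0) (at 0)"
    using has_field_derivative_h[of 0] by (auto intro!: derivative_eq_intros)
  ultimately show False using DERIV_unique deriv_nonzero[of 0] by fastforce
qed

lemma turning_rate_circle_integral:
  assumes "0 < cmod z0" "cmod z0 < 1"
  shows "((\<lambda>t. turning_rate (circle z0 t)) has_integral 1) {0..1}"
proof -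
  define R where "R = cmod z0"
  define f where "f = (\<lambda>u. turning_rate (z0 / of_real R * u))"
  have f: "f holomorphic_on cball 0 R"
    unfolding f_def using assms
    by (intro holomorphic_on_compose_gen[OF _ turning_rate_holomorphic, unfolded o_def] holomorphic_intros)
       (auto simp: R_def norm_mult norm_divide)
  have I: "((\<lambda>t. f (circlepath 0 R t) / circlepath 0 R t * vector_derivative (circlepath 0 R) (at t within {0..1}))
      has_integral 2 * of_real pi * \<i> * f 0) {0..1}"
    using Cauchy_integral_circlepath_simple[OF f, of 0] assms
    by (simp add: has_contour_integral_def R_def)
  have eq: "f (circlepath 0 R t) / circlepath 0 R t * vector_derivative (circlepath 0 R) (at t within {0..1})
      = 2 * of_real pi * \<i> * turning_rate (circle z0 t)" if "t \<in> {0..1}" for t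
  proof -
    have "vector_derivative (circlepath 0 R) (at t within {0..1}) = 2 * of_real pi * \<i> * circlepath 0 R t"
      using that by (subst vector_derivative_circlepath01) (auto simp: circlepath)
    moreover have "z0 / of_real R * circlepath 0 R t = circle z0 t"
      using assms by (simp add: circlepath circle_def R_def)
    moreover have "circlepath 0 R t \<noteq> 0" using assms by (simp add: circlepath R_def)
    ultimately show ?thesis by (simp add: f_def)
  qed
  have "f 0 = 1" by (simp add: f_def turning_rate_def)
  with has_integral_eq[OF eq I]
  have "((\<lambda>t. 2 * of_real pi * \<i> * turning_rate (circle z0 t)) has_integral 2 * of_real pi * \<i> * 1) {0..1}"
    by simp
  from has_integral_mult_right[OF this, of "inverse (2 * of_real pi * \<i>)"] show ?thesis
    by (simp add: field_simps)
qed

lemma image_circle_has_vector_derivative: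
  assumes "cmod z0 < 1"
  shows "((\<lambda>t. h (circle z0 t)) has_vector_derivative
      2 * of_real pi * \<i> * (circle z0 t * deriv h (circle z0 t))) (at t)"
  using field_vector_diff_chain_at[OF circle_has_vector_derivative has_field_derivative_h] assms
  by (simp add: o_def algebra_simps)

lemma tangent_circle_has_vector_derivative:
  assumes "cmod z0 < 1"
  shows "((\<lambda>t. circle z0 t * deriv h (circle z0 t)) has_vector_derivative
      2 * of_real pi * \<i> * turning_rate (circle z0 t) * (circle z0 t * deriv h (circle z0 t))) (at t)"
proof -
  have "circle z0 t \<in> ball 0 1" using assms by simp
  from has_vector_derivative_mult[OF circle_has_vector_derivative[of z0]
      field_vector_diff_chain_at[OF circle_has_vector_derivative[of z0] deriv_has_field_derivative[OF this]]]
  show ?thesis unfolding comp_def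
    by (rule has_vector_derivative_eq_rhs)
       (use deriv_nonzero[OF \<open>circle z0 t \<in> ball 0 1\<close>] in \<open>simp add: turning_rate_def field_simps\<close>)
qed

definition turning_integral :: "complex \<Rightarrow> real \<Rightarrow> complex" where
  "turning_integral z0 t = integral {0..t} (\<lambda>s. turning_rate (circle z0 s))"

lemma turning_integral_has_vector_derivative:
  assumes "cmod z0 < 1" "t \<in> {0..1}"
  shows "(turning_integral z0 has_vector_derivative turning_rate (circle z0 t)) (at t within {0..1})"
proof -
  have "continuous_on {0..1} (circle z0)"
    unfolding circle_def by (intro continuous_intros)
  then have "continuous_on {0..1} (\<lambda>s. turning_rate (circle z0 s))"
    using assms(1)
    by (intro continuous_on_compose2[OF holomorphic_on_imp_continuous_on[OF turning_rate_holomorphic]]) auto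
  then show ?thesis
    unfolding turning_integral_def[abs_def] by (rule integral_has_vector_derivative[OF _ assms(2)])
qed

lemma turning_integral_0 [simp]: "turning_integral z0 0 = 0"
  by (simp add: turning_integral_def)

lemma turning_integral_1:
  assumes "0 < cmod z0" "cmod z0 < 1"
  shows "turning_integral z0 1 = 1"
  using integral_unique[OF turning_rate_circle_integral[OF assms]] by (simp add: turning_integral_def)

lemma tangent_circle_eq_exp:
  assumes "cmod z0 < 1" "t \<in> {0..1}"
  shows "circle z0 t * deriv h (circle z0 t) =
    z0 * deriv h z0 * exp (2 * of_real pi * \<i> * turning_integral z0 t)"
proof -
  define q where "q = (\<lambda>t. circle z0 t * deriv h (circle z0 t))"
  define Q where "Q = (\<lambda>t. q t * exp (- (2 * of_real pi * \<i>) * turning_integral z0 t))"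
  have "(Q has_vector_derivative 0) (at s within {0..1})" if "s \<in> {0..1}" for s
  proof -
    have "((\<lambda>t. - (2 * of_real pi * \<i>) * turning_integral z0 t) has_vector_derivative
        - (2 * of_real pi * \<i>) * turning_rate (circle z0 s)) (at s within {0..1})"
      by (rule has_vector_derivative_mult_right[OF turning_integral_has_vector_derivative[OF assms(1) that]])
    from field_vector_diff_chain_within[OF this DERIV_exp[THEN has_field_derivative_at_within]]
    have "((\<lambda>t. exp (- (2 * of_real pi * \<i>) * turning_integral z0 t)) has_vector_derivative
        (- (2 * of_real pi * \<i>) * turning_rate (circle z0 s)) *
          exp (- (2 * of_real pi * \<i>) * turning_integral z0 s)) (at s within {0..1})"
      by (simp add: o_def)
    from has_vector_derivative_mult[OF has_vector_derivative_at_within[OF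
        tangent_circle_has_vector_derivative[OF assms(1)]] this]
    show ?thesis
      unfolding Q_def q_def by (rule has_vector_derivative_eq_rhs) (simp add: algebra_simps)
  qed
  then obtain c where "\<And>s. s \<in> {0..1} \<Longrightarrow> Q s = c"
    using has_vector_derivative_zero_constant[of "{0..1}" Q] by auto
  then have "Q t = Q 0" using assms(2) by simp
  then have "q t * exp (- (2 * of_real pi * \<i>) * turning_integral z0 t) *
      exp (2 * of_real pi * \<i> * turning_integral z0 t) = q 0 * exp (2 * of_real pi * \<i> * turning_integral z0 t)"
    by (simp add: Q_def)
  then show ?thesis by (simp add: q_def mult.assoc exp_add[symmetric])
qed

lemma mono_Re_turning_integral:
  assumes "cmod z0 < 1"
  shows "mono_on {0..1} (\<lambda>t. Re (turning_integral z0 t))"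
proof (rule mono_onI)
  fix a b :: real assume ab: "a \<in> {0..1}" "b \<in> {0..1}" "a \<le> b"
  show "Re (turning_integral z0 a) \<le> Re (turning_integral z0 b)"
  proof (rule DERIV_nonneg_imp_increasing_open[OF ab(3)])
    have "continuous_on {0..1} (turning_integral z0)"
      using turning_integral_has_vector_derivative[OF assms] by (rule continuous_on_vector_derivative)
    then have "continuous_on {a..b} (turning_integral z0)"
      by (rule continuous_on_subset) (use ab in auto)
    then show "continuous_on {a..b} (\<lambda>t. Re (turning_integral z0 t))"
      by (rule continuous_on_Re)
    fix x assume x: "a < x" "x < b"
    then have "at x within {0..1} = at x" using ab by (intro at_within_interior) auto
    with turning_integral_has_vector_derivative[OF assms, of x] x ab
    have "((\<lambda>t. Re (turning_integral z0 t)) has_real_derivative Re (turning_rate (circle z0 x))) (at x)"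
      by (auto intro: has_field_derivative_Re)
    moreover have "0 \<le> Re (turning_rate (circle z0 x))"
      using Re_turning_rate_pos[of "circle z0 x"] assms by simp
    ultimately show "\<exists>y. ((\<lambda>t. Re (turning_integral z0 t)) has_real_derivative y) (at x) \<and> 0 \<le> y"
      by blast
  qed
qed

lemma tangent_offset_has_real_derivative:
  assumes z0: "cmod z0 < 1" and s: "s \<in> {0..1}"
  shows "((\<lambda>s. Re (cnj (z0 * deriv h z0) * (h z0 - h (circle z0 s)))) has_real_derivative
    2 * pi * (cmod (z0 * deriv h z0))\<^sup>2 * exp (- 2 * pi * Im (turning_integral z0 s))
      * sin (2 * pi * Re (turning_integral z0 s))) (at s)"
proof -
  define q0 where "q0 = z0 * deriv h z0"
  define A where "A = turning_integral z0 s"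
  define D where "D = cnj q0 * (0 - 2 * of_real pi * \<i> * (circle z0 s * deriv h (circle z0 s)))"
  have "D = - (2 * of_real pi * \<i>) * (cnj q0 * q0) * exp (2 * of_real pi * \<i> * A)"
    unfolding D_def tangent_circle_eq_exp[OF z0 s] by (simp add: q0_def A_def algebra_simps)
  also have "cnj q0 * q0 = of_real ((cmod q0)\<^sup>2)"
    by (subst complex_norm_square) (rule mult.commute)
  finally have "Re D = 2 * pi * (cmod q0)\<^sup>2 * Im (exp (2 * of_real pi * \<i> * A))"
    by simp
  also have "Im (exp (2 * of_real pi * \<i> * A)) = exp (- 2 * pi * Im A) * sin (2 * pi * Re A)"
    unfolding Im_exp by simp
  finally have "Re D = 2 * pi * (cmod q0)\<^sup>2 * exp (- 2 * pi * Im A) * sin (2 * pi * Re A)"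
    by simp
  moreover have "((\<lambda>s. Re (cnj q0 * (h z0 - h (circle z0 s)))) has_real_derivative Re D) (at s)"
    unfolding D_def using z0
    by (intro has_field_derivative_Re has_vector_derivative_mult_right has_vector_derivative_diff
        has_vector_derivative_const image_circle_has_vector_derivative)
  ultimately show ?thesis by (simp add: q0_def A_def)
qed

text \<open>Along |z| = R the tangent turns monotonically through one full turn, so every
  point of the image curve lies on the inner side of each tangent line.\<close>

lemma support_circle:
  assumes z0: "0 < cmod z0" "cmod z0 < 1" and z: "cmod z = cmod z0"
  shows "0 \<le> Re (cnj (z0 * deriv h z0) * (h z0 - h z))"
proof -
  define F where "F = (\<lambda>s. Re (cnj (z0 * deriv h z0) * (h z0 - h (circle z0 s))))"
  define \<Theta> where "\<Theta> = (\<lambda>s. Re (turning_integral z0 s))"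
  define w where "w = (\<lambda>s. 2 * pi * (cmod (z0 * deriv h z0))\<^sup>2 * exp (- 2 * pi * Im (turning_integral z0 s)))"
  have "continuous_on {0..1} (\<lambda>s. h (circle z0 s))"
    using image_circle_has_vector_derivative[OF z0(2)]
    by (intro continuous_at_imp_continuous_on ballI has_vector_derivative_continuous)
  then have Fc: "continuous_on {0..1} F"
    unfolding F_def by (intro continuous_intros)
  obtain s where s: "s \<in> {0..1}" "circle z0 s = z"
    using circle_surj[of z0 z] z0 z by auto
  have "0 \<le> F s"
  proof (rule nonneg_if_derivative_follows_sin[where F = F and w = w and \<Theta> = \<Theta>])
    show "(F has_real_derivative w x * sin (2 * pi * \<Theta> x)) (at x)" if "x \<in> {0<..<1}" for x
      using tangent_offset_has_real_derivative[OF z0(2), of x] that by (simp add: F_def w_def \<Theta>_def)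
    show "0 \<le> w x" if "x \<in> {0<..<1}" for x by (simp add: w_def)
    show "F 0 = 0" "F 1 = 0" by (simp_all add: F_def)
    show "mono_on {0..1} \<Theta>" unfolding \<Theta>_def by (rule mono_Re_turning_integral[OF z0(2)])
    show "\<Theta> 0 = 0" "\<Theta> 1 = 1" by (simp_all add: \<Theta>_def turning_integral_1[OF z0])
  qed (use s Fc in simp_all)
  then show ?thesis by (simp add: F_def s(2))
qed

text \<open>The maximum modulus principle for exp (k (h w - h z0)) carries the inequality from the
  circle into the disc; it is strict because h is not constant.\<close>

lemma support_inside:
  assumes z0: "0 < cmod z0" "cmod z0 < 1" and z: "cmod z < cmod z0"
  shows "0 < Re (cnj (z0 * deriv h z0) * (h z0 - h z))"
proof -
  define R where "R = cmod z0"
  define k where "k = cnj (z0 * deriv h z0)"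
  define E where "E = (\<lambda>w. exp (k * (h w - h z0)))"
  have R: "0 < R" "R < 1" using z0 by (simp_all add: R_def)
  have knz: "k \<noteq> 0" unfolding k_def using deriv_nonzero[of z0] z0 by auto
  have norm_E: "cmod (E w) = exp (- Re (k * (h z0 - h w)))" for w
    unfolding E_def norm_exp_eq_Re by (simp add: algebra_simps)
  have E_hol: "E holomorphic_on ball 0 1" unfolding E_def using holomorphic by (intro holomorphic_intros)
  have sub: "cball 0 R \<subseteq> ball 0 1" using R by auto
  then have E_hol_R: "E holomorphic_on ball 0 R" by (intro holomorphic_on_subset[OF E_hol]) auto
  have E_le: "cmod (E w) \<le> 1" if "w \<in> ball 0 R" for w
  proof (rule maximum_modulus_frontier[of E "ball 0 R"])
    show "continuous_on (closure (ball 0 R)) E"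
      using holomorphic_on_imp_continuous_on[OF E_hol] sub closure_ball[OF R(1)]
      by (metis continuous_on_subset)
    fix x :: complex assume "x \<in> frontier (ball 0 R)"
    then have "cmod x = cmod z0" using frontier_ball[OF R(1), of 0] by (auto simp: R_def)
    from support_circle[OF z0 this] show "cmod (E x) \<le> 1" unfolding norm_E k_def by simp
  qed (use that E_hol_R in auto)
  have zR: "z \<in> ball 0 R" using z by (simp add: R_def)
  show ?thesis
  proof (rule ccontr)
    assume "\<not> ?thesis"
    with E_le[OF zR] have "cmod (E z) = 1" unfolding norm_E k_def by simp
    then have "E constant_on ball 0 R"
      by (intro maximum_modulus_principle[of E "ball 0 R" "ball 0 R" z]) (use E_hol_R zR E_le in auto)
    then obtain c where c: "\<And>w. w \<in> ball 0 R \<Longrightarrow> E w = c" unfolding constant_on_def by blast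
    have "(E has_field_derivative 0) (at z)"
      by (rule has_field_derivative_transform_within_open[of "\<lambda>_. c" 0 z "ball 0 R"])
         (use zR c in \<open>auto intro: derivative_eq_intros\<close>)
    moreover have z1: "z \<in> ball 0 1" using z z0 by simp
    then have "(E has_field_derivative k * deriv h z * E z) (at z)"
      unfolding E_def by (auto intro!: derivative_eq_intros has_field_derivative_h)
    ultimately have "k * deriv h z * E z = 0" using DERIV_unique by blast
    then show False using knz deriv_nonzero[OF z1] by (simp add: E_def)
  qed
qed

text \<open>z h'(z) / (h z - w) has positive real part on the circle, hence a continuous logarithm;
  so h - w winds around 0 as often as the tangent turns, i.e. once.\<close>

lemma winding_image_circle:
  assumes R: "0 < R" "R < 1"
    and w: "\<And>z0. cmod z0 = R \<Longrightarrow> 0 < Re (cnj (z0 * deriv h z0) * (h z0 - w))"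
  shows "((\<lambda>z. deriv h z / (h z - w)) has_contour_integral 2 * of_real pi * \<i>) (circlepath 0 R)"
proof -
  define \<gamma> where "\<gamma> = circle (of_real R)"
  have \<gamma>_norm: "cmod (\<gamma> t) = R" and \<gamma>_disc: "cmod (of_real R :: complex) < 1" for t
    using R by (simp_all add: \<gamma>_def)
  define q where "q = (\<lambda>t. \<gamma> t * deriv h (\<gamma> t))"
  define H where "H = (\<lambda>t. h (\<gamma> t) - w)"
  have q': "(q has_vector_derivative 2 * of_real pi * \<i> * turning_rate (\<gamma> t) * q t) (at t)" for t
    unfolding q_def \<gamma>_def by (rule tangent_circle_has_vector_derivative[OF \<gamma>_disc])
  have H': "(H has_vector_derivative 2 * of_real pi * \<i> * q t) (at t)" for t
    using image_circle_has_vector_derivative[OF \<gamma>_disc]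
    unfolding H_def q_def \<gamma>_def has_vector_derivative_diff_const .
  have Re_pos: "0 < Re (cnj (q t) * H t)" for t
    using w[OF \<gamma>_norm[of t]] unfolding q_def H_def .
  then have H_nz: "H t \<noteq> 0" for t by (metis mult_zero_right zero_complex.simps(1) less_irrefl)
  have q_nz: "q t \<noteq> 0" for t
    unfolding q_def using deriv_nonzero[of "\<gamma> t"] \<gamma>_norm[of t] R by auto
  define \<rho> where "\<rho> = (\<lambda>t. q t / H t)"
  have "Re (\<rho> t) = Re (cnj (q t) * H t) / (cmod (H t))\<^sup>2" for t
    unfolding \<rho>_def by (simp add: Re_divide')
  then have \<rho>_pos: "0 < Re (\<rho> t)" for t using Re_pos[of t] H_nz[of t] by simp
  have \<rho>_slit: "\<rho> t \<notin> \<real>\<^sub>\<le>\<^sub>0" for t using \<rho>_pos[of t] by (auto simp: complex_nonpos_Reals_iff)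
  define L' where "L' = (\<lambda>t. 2 * of_real pi * \<i> * turning_rate (\<gamma> t) - 2 * of_real pi * \<i> * q t / H t)"
  have L': "((\<lambda>t. Ln (\<rho> t)) has_vector_derivative L' t) (at t)" for t
    using has_vector_derivative_Ln_quotient[OF q' H' q_nz H_nz \<rho>_slit[unfolded \<rho>_def], of t] q_nz[of t]
    unfolding \<rho>_def L'_def by simp
  have "Ln (\<rho> 1) - Ln (\<rho> 0) = 0" by (simp add: \<rho>_def q_def H_def \<gamma>_def)
  then have I_L': "(L' has_integral 0) {0..1}"
    using fundamental_theorem_of_calculus[of 0 1 "\<lambda>t. Ln (\<rho> t)" L'] L'
    by (auto intro: has_vector_derivative_at_within)
  have I_p: "((\<lambda>t. 2 * of_real pi * \<i> * turning_rate (\<gamma> t)) has_integral 2 * of_real pi * \<i> * 1) {0..1}"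
    unfolding \<gamma>_def by (rule has_integral_mult_right[OF turning_rate_circle_integral]) (use R in simp_all)
  have I: "((\<lambda>t. 2 * of_real pi * \<i> * turning_rate (\<gamma> t) - L' t) has_integral 2 * of_real pi * \<i> * 1 - 0) {0..1}"
    by (rule has_integral_diff[OF I_p I_L'])
  have eq: "2 * of_real pi * \<i> * turning_rate (\<gamma> t) - L' t =
      deriv h (circlepath 0 R t) / (h (circlepath 0 R t) - w) * vector_derivative (circlepath 0 R) (at t within {0..1})"
    if "t \<in> {0..1}" for t
  proof -
    have "vector_derivative (circlepath 0 R) (at t within {0..1}) = 2 * of_real pi * \<i> * \<gamma> t"
      using that by (subst vector_derivative_circlepath01) (auto simp: \<gamma>_def circlepath circle_def)
    moreover have "circlepath 0 R t = \<gamma> t" by (simp add: \<gamma>_def circlepath_eq_circle)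
    ultimately show ?thesis by (simp add: L'_def q_def H_def)
  qed
  from has_integral_eq[OF eq I] show ?thesis
    unfolding has_contour_integral_def by simp
qed

lemma card_preimage_eq_1:
  assumes R: "0 < R" "R < 1"
    and w: "\<And>z0. cmod z0 = R \<Longrightarrow> 0 < Re (cnj (z0 * deriv h z0) * (h z0 - w))"
  shows "card {z \<in> ball 0 R. h z = w} = 1"
proof -
  define f where "f = (\<lambda>z. h z - w)"
  have deriv_f: "deriv f z = deriv h z" if "z \<in> ball 0 1" for z
    unfolding f_def using has_field_derivative_h[OF that]
    by (intro DERIV_imp_deriv) (auto intro!: derivative_eq_intros)
  have "contour_integral (circlepath 0 R) (\<lambda>z. deriv f z / f z) = 2 * of_real pi * \<i>"
  proof (rule contour_integral_unique[OF has_contour_integral_eq[OF winding_image_circle[OF R w]]])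
    fix x assume "x \<in> path_image (circlepath 0 R)"
    then have "x \<in> ball 0 1" using R by (auto simp: path_image_circlepath_nonneg)
    then show "deriv h x / (h x - w) = deriv f x / f x" using deriv_f by (simp add: f_def)
  qed
  moreover have "contour_integral (circlepath 0 R) (\<lambda>z. deriv f z / f z) =
      2 * of_real pi * \<i> * of_nat (card {z \<in> ball 0 R. f z = 0})"
  proof (rule contour_integral_logderiv_eq_card_zeros[OF _ _ _ R])
    show "f holomorphic_on ball 0 1" unfolding f_def using holomorphic by (intro holomorphic_intros)
    show "\<not> f constant_on ball 0 1" unfolding f_def by (rule not_constant)
  qed (use w deriv_f deriv_nonzero in \<open>fastforce simp: f_def\<close>)+
  ultimately show ?thesis by (simp add: f_def)
qed

lemma convex_image_ball:
  assumes R: "0 < R" "R < 1"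
  shows "convex (h ` ball 0 R)"
proof (rule convexI)
  fix x y and u v :: real assume x: "x \<in> h ` ball 0 R" and y: "y \<in> h ` ball 0 R" and uv: "0 \<le> u" "0 \<le> v" "u + v = 1"
  have "0 < Re (cnj (z0 * deriv h z0) * (h z0 - (u *\<^sub>R x + v *\<^sub>R y)))" if z0: "cmod z0 = R" for z0
  proof -
    define k where "k = cnj (z0 * deriv h z0)"
    have "v = 1 - u" using uv by simp
    obtain a b where ab: "a \<in> ball 0 R" "x = h a" "b \<in> ball 0 R" "y = h b" using x y by auto
    have "0 < Re (k * (h z0 - h a))" unfolding k_def by (rule support_inside) (use ab z0 R in auto)
    moreover have "0 < Re (k * (h z0 - h b))" unfolding k_def by (rule support_inside) (use ab z0 R in auto)
    ultimately have "u *\<^sub>R (k * (h z0 - h a)) + v *\<^sub>R (k * (h z0 - h b)) \<in> {w. Re w > 0}"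
      using uv by (intro convexD[OF convex_halfspace_Re_gt]) auto
    moreover have "k * (h z0 - (u *\<^sub>R x + v *\<^sub>R y)) = u *\<^sub>R (k * (h z0 - h a)) + v *\<^sub>R (k * (h z0 - h b))"
      using ab unfolding \<open>v = 1 - u\<close> by (simp add: scaleR_conv_of_real algebra_simps)
    ultimately show ?thesis by (simp add: k_def)
  qed
  then have "card {z \<in> ball 0 R. h z = u *\<^sub>R x + v *\<^sub>R y} = 1"
    by (rule card_preimage_eq_1[OF R])
  then show "u *\<^sub>R x + v *\<^sub>R y \<in> h ` ball 0 R"
    by (metis (mono_tags, lifting) card.empty empty_Collect_eq image_eqI zero_neq_one)
qed

lemma inj_on_ball: "inj_on h (ball 0 1)"
proof (rule inj_onI)
  fix a b assume ab: "a \<in> ball 0 1" "b \<in> ball 0 1" "h a = h b"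
  obtain R where R: "0 < R" "R < 1" and "a \<in> ball 0 R" "b \<in> ball 0 R"
    using points_in_smaller_ball[OF ab(1,2)] .
  have "cmod z0 = R \<Longrightarrow> 0 < Re (cnj (z0 * deriv h z0) * (h z0 - h a))" for z0
    using R \<open>a \<in> ball 0 R\<close> by (intro support_inside) auto
  then have "card {z \<in> ball 0 R. h z = h a} = 1" by (rule card_preimage_eq_1[OF R])
  then obtain c where "{z \<in> ball 0 R. h z = h a} = {c}" by (rule card_1_singletonE)
  then show "a = b" using ab(3) \<open>a \<in> ball 0 R\<close> \<open>b \<in> ball 0 R\<close>
    by (metis (mono_tags, lifting) mem_Collect_eq singletonD)
qed

lemma segment_preimage_path:
  assumes z: "z1 \<in> ball 0 1" "z2 \<in> ball 0 1"
  obtains \<Gamma> where "\<Gamma> 0 = z1" "\<Gamma> 1 = z2"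
    and "\<And>t. t \<in> {0..1} \<Longrightarrow> \<Gamma> t \<in> ball 0 1 \<and> h (\<Gamma> t) = h z1 + of_real t * (h z2 - h z1)"
    and "\<And>t. t \<in> {0..1} \<Longrightarrow> (\<Gamma> has_vector_derivative (h z2 - h z1) / deriv h (\<Gamma> t)) (at t)"
proof
  define c where "c = h z2 - h z1"
  define L where "L = (\<lambda>t::real. h z1 + of_real t * c)"
  define g where "g = inv_into (ball 0 1) h"
  have g: "g (h z) = z" if "z \<in> ball 0 1" for z
    unfolding g_def by (rule inv_into_f_f[OF inj_on_ball that])
  obtain R where R: "0 < R" "R < 1" and "z1 \<in> ball 0 R" "z2 \<in> ball 0 R"
    using points_in_smaller_ball[OF z] .
  have L_img: "L t \<in> h ` ball 0 1" if "t \<in> {0..1}" for t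
  proof -
    have "(1 - t) *\<^sub>R h z1 + t *\<^sub>R h z2 \<in> h ` ball 0 R"
      using convex_image_ball[OF R] \<open>z1 \<in> ball 0 R\<close> \<open>z2 \<in> ball 0 R\<close> that
      by (intro convexD) auto
    moreover have "(1 - t) *\<^sub>R h z1 + t *\<^sub>R h z2 = L t"
      by (simp add: L_def c_def scaleR_conv_of_real algebra_simps)
    ultimately show ?thesis using R by auto
  qed
  have \<Gamma>: "g (L t) \<in> ball 0 1 \<and> h (g (L t)) = L t" if "t \<in> {0..1}" for t
    using L_img[OF that] g by auto
  then show "\<And>t. t \<in> {0..1} \<Longrightarrow> g (L t) \<in> ball 0 1 \<and> h (g (L t)) = h z1 + of_real t * (h z2 - h z1)"
    by (simp add: L_def c_def)
  show "g (L 0) = z1" "g (L 1) = z2" using g z by (simp_all add: L_def c_def)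
  fix t :: real assume t: "t \<in> {0..1}"
  have L': "(L has_vector_derivative c) (at t)"
    using has_vector_derivative_real_field[of "\<lambda>x. h z1 + x * c" c "of_real t"]
    by (auto simp: L_def intro!: derivative_eq_intros)
  have g': "(g has_field_derivative inverse (deriv h (g (L t)))) (at (L t))"
  proof (rule has_field_derivative_inverse_strong_x[of h _ g "L t" "ball 0 1"])
    show "continuous_on (ball 0 1) h" by (rule holomorphic_on_imp_continuous_on[OF holomorphic])
  qed (use \<Gamma>[OF t] has_field_derivative_h deriv_nonzero g in auto)
  from field_vector_diff_chain_at[OF L' g']
  show "((\<lambda>t. g (L t)) has_vector_derivative (h z2 - h z1) / deriv h (g (L t))) (at t)"
    by (simp add: c_def comp_def divide_inverse)
qed

lemma u_along_path_has_vector_derivative: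
  assumes \<Gamma>': "(\<Gamma> has_vector_derivative d) (at t)" and \<Gamma>: "\<Gamma> t \<in> ball 0 1"
  shows "((\<lambda>t. h (\<Gamma> t) + of_real ((1 - (cmod (\<Gamma> t))\<^sup>2) / 2) * \<Gamma> t * deriv h (\<Gamma> t))
    has_vector_derivative d * deriv h (\<Gamma> t) + ((1 - \<Gamma> t * cnj (\<Gamma> t)) *
      (\<Gamma> t * d * deriv (deriv h) (\<Gamma> t) + d * deriv h (\<Gamma> t))
      - (\<Gamma> t * cnj d + d * cnj (\<Gamma> t)) * (\<Gamma> t * deriv h (\<Gamma> t))) / 2) (at t)"
proof -
  have h': "((\<lambda>t. h (\<Gamma> t)) has_vector_derivative d * deriv h (\<Gamma> t)) (at t)"
    using field_vector_diff_chain_at[OF \<Gamma>' has_field_derivative_h[OF \<Gamma>]] by (simp add: comp_def)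
  have h'': "((\<lambda>t. deriv h (\<Gamma> t)) has_vector_derivative d * deriv (deriv h) (\<Gamma> t)) (at t)"
    using field_vector_diff_chain_at[OF \<Gamma>' deriv_has_field_derivative[OF \<Gamma>]] by (simp add: comp_def)
  have N': "((\<lambda>t. 1 - \<Gamma> t * cnj (\<Gamma> t)) has_vector_derivative - (\<Gamma> t * cnj d + d * cnj (\<Gamma> t))) (at t)"
    using has_vector_derivative_diff[OF has_vector_derivative_const
        has_vector_derivative_mult[OF \<Gamma>' has_vector_derivative_cnj[OF \<Gamma>']]] by simp
  have M': "((\<lambda>t. \<Gamma> t * deriv h (\<Gamma> t)) has_vector_derivative
      \<Gamma> t * d * deriv (deriv h) (\<Gamma> t) + d * deriv h (\<Gamma> t)) (at t)"
    using has_vector_derivative_mult[OF \<Gamma>' h''] by (simp add: mult.assoc)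
  have eq: "of_real ((1 - (cmod z)\<^sup>2) / 2) * z * deriv h z = inverse 2 * ((1 - z * cnj z) * (z * deriv h z))"
    for z unfolding complex_norm_square[symmetric] by (simp add: field_simps)
  have "((\<lambda>t. h (\<Gamma> t) + inverse 2 * ((1 - \<Gamma> t * cnj (\<Gamma> t)) * (\<Gamma> t * deriv h (\<Gamma> t))))
      has_vector_derivative d * deriv h (\<Gamma> t) + inverse 2 * ((1 - \<Gamma> t * cnj (\<Gamma> t)) *
        (\<Gamma> t * d * deriv (deriv h) (\<Gamma> t) + d * deriv h (\<Gamma> t))
        + - (\<Gamma> t * cnj d + d * cnj (\<Gamma> t)) * (\<Gamma> t * deriv h (\<Gamma> t)))) (at t)"
    by (intro has_vector_derivative_add[OF h'] has_vector_derivative_mult_right has_vector_derivative_mult N' M')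
  then show ?thesis
    unfolding eq by (simp only: divide_inverse_commute minus_mult_left diff_conv_add_uminus)
qed

lemma inj_on_u:
  assumes u: "\<And>z. z \<in> ball 0 1 \<Longrightarrow> u z = h z + complex_of_real ((1 - (cmod z)\<^sup>2) / 2) * z * deriv h z"
  shows "inj_on u (ball 0 1)"
proof (rule inj_onI, rule ccontr)
  fix z1 z2 assume z: "z1 \<in> ball 0 1" "z2 \<in> ball 0 1" "u z1 = u z2" and "z1 \<noteq> z2"
  define c where "c = h z2 - h z1"
  have "c \<noteq> 0" using inj_onD[OF inj_on_ball _ z(1,2)] \<open>z1 \<noteq> z2\<close> by (auto simp: c_def)
  obtain \<Gamma> where \<Gamma>01: "\<Gamma> 0 = z1" "\<Gamma> 1 = z2"
    and \<Gamma>: "\<And>t. t \<in> {0..1} \<Longrightarrow> \<Gamma> t \<in> ball 0 1 \<and> h (\<Gamma> t) = h z1 + of_real t * c"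
    and \<Gamma>': "\<And>t. t \<in> {0..1} \<Longrightarrow> (\<Gamma> has_vector_derivative c / deriv h (\<Gamma> t)) (at t)"
    using segment_preimage_path[OF z(1,2)] unfolding c_def by blast
  define V where "V = (\<lambda>t. h (\<Gamma> t) + of_real ((1 - (cmod (\<Gamma> t))\<^sup>2) / 2) * \<Gamma> t * deriv h (\<Gamma> t))"
  define V' where "V' = (\<lambda>t. let z = \<Gamma> t; d = c / deriv h z in
    d * deriv h z + ((1 - z * cnj z) * (z * d * deriv (deriv h) z + d * deriv h z)
      - (z * cnj d + d * cnj z) * (z * deriv h z)) / 2)"
  have "((\<lambda>t. Re (cnj c * V t)) has_real_derivative Re (cnj c * V' t)) (at t)" if "t \<in> {0..1}" for t
    unfolding V_def V'_def Let_def
    using \<Gamma>[OF that] \<Gamma>'[OF that]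
    by (intro has_field_derivative_Re has_vector_derivative_mult_right u_along_path_has_vector_derivative) auto
  then obtain \<xi> where \<xi>: "0 < \<xi>" "\<xi> < 1" "Re (cnj c * V 1) - Re (cnj c * V 0) = (1 - 0) * Re (cnj c * V' \<xi>)"
    using MVT2[of 0 1 "\<lambda>t. Re (cnj c * V t)" "\<lambda>t. Re (cnj c * V' t)"] by auto
  have "0 < Re (cnj c * V' \<xi>)"
    unfolding V'_def Let_def
  proof (rule Re_pullback_derivative_pos)
    show "cmod (\<Gamma> \<xi>) < 1" using \<Gamma>[of \<xi>] \<xi> by auto
  qed (use \<open>c \<noteq> 0\<close> \<Gamma>[of \<xi>] \<xi> deriv_nonzero Re_convexity_pos in auto)
  moreover have "V 0 = u z1" "V 1 = u z2" using u z by (simp_all add: V_def \<Gamma>01)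
  ultimately show False using \<xi> z(3) by simp
qed

end

lemma univalence_radius_le_1:
  fixes \<alpha> :: real
  assumes "\<alpha> < 1/2"
  shows "(- (1 - \<alpha>) + sqrt ((1 - \<alpha>)\<^sup>2 + 1 - 2 * \<alpha>)) / (1 - 2 * \<alpha>) \<le> 1"
proof -
  have "(2 - 3 * \<alpha>)\<^sup>2 - ((1 - \<alpha>)\<^sup>2 + 1 - 2 * \<alpha>) = 2 * (1 - 2 * \<alpha>)\<^sup>2"
    by (simp add: power2_eq_square algebra_simps)
  then have "(1 - \<alpha>)\<^sup>2 + 1 - 2 * \<alpha> \<le> (2 - 3 * \<alpha>)\<^sup>2"
    using zero_le_power2[of "1 - 2 * \<alpha>"] by linarith
  then have "sqrt ((1 - \<alpha>)\<^sup>2 + 1 - 2 * \<alpha>) \<le> 2 - 3 * \<alpha>"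
    using assms real_sqrt_le_mono by fastforce
  then show ?thesis using assms by (simp add: divide_le_eq)
qed

theorem theorem2:
  fixes \<alpha> :: real and h u :: "complex \<Rightarrow> complex"
  assumes "0 \<le> \<alpha>" and "\<alpha> < 1"
    and "convex_of_order \<alpha> h"
    and "\<And>z. z \<in> ball 0 1 \<Longrightarrow>
           u z = h z + complex_of_real ((1 - (cmod z)\<^sup>2) / 2) * z * deriv h z"
  shows "(1/2 \<le> \<alpha> \<longrightarrow> inj_on u (ball 0 1)) \<and>
         (\<alpha> < 1/2 \<longrightarrow>
            inj_on u (ball 0 ((- (1 - \<alpha>) + sqrt ((1 - \<alpha>)\<^sup>2 + 1 - 2 * \<alpha>)) / (1 - 2 * \<alpha>))))"
proof -
  interpret convex_map h
    using assms(1,3) unfolding convex_of_order_def by unfold_locales (auto intro: le_less_trans)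
  have inj: "inj_on u (ball 0 1)" by (rule inj_on_u[OF assms(4)])
  show ?thesis
  proof (intro conjI impI)
    assume "\<alpha> < 1/2"
    from inj_on_subset[OF inj subset_ball[OF univalence_radius_le_1[OF this]]]
    show "inj_on u (ball 0 ((- (1 - \<alpha>) + sqrt ((1 - \<alpha>)\<^sup>2 + 1 - 2 * \<alpha>)) / (1 - 2 * \<alpha>)))" .
  qed (rule inj)
qed

end
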